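(* Let $f_1,f_2,\ldots,f_{KN}$ be drawn i.i.d. from a distribution $\mathcal{F}$ over types, and for $i\in[K]$ let $\widehat{p}(\mathbf{b}^{(i)})=\frac1N\sum_{\tau=1}^N\mathbb{1}\{b_{f_{(i-1)N+\tau}}(\mathbf{x}^{(\mathbf{b}^{(i)})})=a^{(\mathbf{b}^{(i)})}\}$ (so the estimates for different $i$ use disjoint rounds). For $\mathbf{w}\in\mathcal{W}$ define $\widehat{p}(\mathbf{w})=\sum_{i=1}^K\lambda_i(\mathbf{w})\widehat{p}(\mathbf{b}^{(i)})$. Then for every $\sigma\in\Sigma$ and $a_f\in\mathcal{A}_f$, $\mathrm{Var}\big(\widehat{p}(\mathbb{1}_{(\sigma=a_f)})\big)\le\frac{K}{N}$.
   Context: Finite leader actions $\mathcal{A}$, finite follower actions $\mathcal{A}_f$, follower types $\alpha^{(1)},\ldots,\alpha^{(K)}$ with context-independent utilities $u_{\alpha^{(i)}}:\mathcal{A}\times\mathcal{A}_f\to[0,1]$; for $\mathbf{x}\in\Delta(\mathcal{A})$, $b_f(\mathbf{x})\in\arg\max_{a_f}\sum_{a_l}\mathbf{x}[a_l]u_f(a_l,a_f)$, ties broken by a fixed ordering. $\sigma^{(\mathbf{x})}$ maps $\alpha^{(i)}\mapsto b_{\alpha^{(i)}}(\mathbf{x})$, $\Sigma=\{\sigma^{(\mathbf{x})}:\mathbf{x}\in\Delta(\mathcal{A})\}$. For $\sigma\in\Sigma$, $a_f\in\mathcal{A}_f$, $\mathbb{1}_{(\sigma=a_f)}\in\{0,1\}^K$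 has $i$-th entry $\mathbb{1}\{\sigma(\alpha^{(i)})=a_f\}$, and $\mathcal{W}$ is the set of all such vectors. $\mathcal{B}=\{\mathbf{b}^{(1)},\ldots,\mathbf{b}^{(K)}\}\subseteq\mathcal{W}$ is a barycentric spanner: each $\mathbf{w}\in\mathcal{W}$ equals $\sum_i\lambda_i(\mathbf{w})\mathbf{b}^{(i)}$ with $\lambda_i(\mathbf{w})\in[-1,1]$. For each $\mathbf{b}\in\mathcal{B}$, $\mathbf{x}^{(\mathbf{b})}$, $a^{(\mathbf{b})}$ satisfy $\mathbf{b}=\mathbb{1}_{(\sigma^{(\mathbf{x}^{(\mathbf{b})})}=a^{(\mathbf{b})})}$. *)

theory Defs
  imports "HOL-Probability.Probability"
begin

definition mixed_strats :: "('l::finite \<Rightarrow> real) set" where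
  "mixed_strats = {x. (\<forall>a. 0 \<le> x a) \<and> (\<Sum>a\<in>UNIV. x a) = 1}"

definition exp_util :: "('l::finite \<Rightarrow> 'f \<Rightarrow> real) \<Rightarrow> ('l \<Rightarrow> real) \<Rightarrow> 'f \<Rightarrow> real" where
  "exp_util u x af = (\<Sum>al\<in>UNIV. x al * u al af)"

definition best_resp :: "('l::finite \<Rightarrow> 'f::{finite,linorder} \<Rightarrow> real) \<Rightarrow> ('l \<Rightarrow> real) \<Rightarrow> 'f" where
  "best_resp u x = (LEAST af. \<forall>af'. exp_util u x af' \<le> exp_util u x af)"

(* Indicator vector 1_{(sigma^(x) = af)} in {0,1}^K, for follower types indexed 0..K-1
   (entries outside {..<K} are 0). *)
definition ind_vec :: "nat \<Rightarrow> (nat \<Rightarrow> 'l::finite \<Rightarrow> 'f::{finite,linorder} \<Rightarrow> real)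
      \<Rightarrow> ('l \<Rightarrow> real) \<Rightarrow> 'f \<Rightarrow> nat \<Rightarrow> real" where
  "ind_vec K u x af = (\<lambda>j. if j < K \<and> best_resp (u j) x = af then 1 else 0)"

definition Wset :: "nat \<Rightarrow> (nat \<Rightarrow> 'l::finite \<Rightarrow> 'f::{finite,linorder} \<Rightarrow> real) \<Rightarrow> (nat \<Rightarrow> real) set" where
  "Wset K u = {ind_vec K u x af | x af. x \<in> mixed_strats}"

(* Estimate p-hat(b^(i)) from rounds i*N .. i*N+N-1 (0-indexed) of the sample s *)
definition phat_b :: "nat \<Rightarrow> (nat \<Rightarrow> 'l::finite \<Rightarrow> 'f::{finite,linorder} \<Rightarrow> real)
      \<Rightarrow> (nat \<Rightarrow> 'l \<Rightarrow> real) \<Rightarrow> (nat \<Rightarrow> 'f) \<Rightarrow> (nat \<Rightarrow> nat) \<Rightarrow> nat \<Rightarrow> real" where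
  "phat_b N u xb ab s i =
     (1 / real N) * (\<Sum>\<tau><N. if best_resp (u (s (i * N + \<tau>))) (xb i) = ab i then 1 else 0)"

definition phat :: "nat \<Rightarrow> nat \<Rightarrow> (nat \<Rightarrow> 'l::finite \<Rightarrow> 'f::{finite,linorder} \<Rightarrow> real)
      \<Rightarrow> (nat \<Rightarrow> 'l \<Rightarrow> real) \<Rightarrow> (nat \<Rightarrow> 'f) \<Rightarrow> ((nat \<Rightarrow> real) \<Rightarrow> nat \<Rightarrow> real)
      \<Rightarrow> (nat \<Rightarrow> real) \<Rightarrow> (nat \<Rightarrow> nat) \<Rightarrow> real" where
  "phat K N u xb ab lam w s = (\<Sum>i<K. lam w i * phat_b N u xb ab s i)"

end

theory Submission
  imports Defs
begin

text \<open>
  The estimate for \<open>w\<close> is a weighted sum over the \<open>K N\<close> independent rounds of the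
  indicator that the sampled follower plays the queried action, round \<open>j\<close> carrying the
  weight \<open>\<lambda>\<^sub>i(w) / N\<close> with \<open>i = j div N\<close>. By independence (Bienayme) its variance is the
  sum of the per-round variances. Since \<open>\<bar>\<lambda>\<^sub>i(w)\<bar> \<le> 1\<close> (the only property of the spanner
  that is needed), each round contributes a variable with values in \<open>[-1/N, 1/N]\<close>, hence
  variance at most \<open>1/N\<^sup>2\<close>; summing over the \<open>K N\<close> rounds gives \<open>K / N\<close>.
\<close>

lemma sum_lessThan_mult_blocks:
  fixes h :: "nat \<Rightarrow> 'a::comm_monoid_add"
  shows "(\<Sum>j<K * N. h j) = (\<Sum>i<K. \<Sum>\<tau><N. h (i * N + \<tau>))"
proof -
  have "(\<Sum>j\<in>{i * N..<i * N + N}. h j) = (\<Sum>\<tau><N. h (i * N + \<tau>))" for i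
    using sum.shift_bounds_nat_ivl[of h 0 "i * N" N] by (simp add: lessThan_atLeast0 add.commute)
  then show ?thesis
    using sum.nat_group[of "\<lambda>j. h j" N K] by simp
qed

lemma (in prob_space) variance_le_square_bound:
  fixes X :: "'a \<Rightarrow> real"
  assumes X: "X \<in> borel_measurable M" and bound: "AE x in M. \<bar>X x\<bar> \<le> c"
  shows "variance X \<le> c\<^sup>2"
proof -
  have "integrable M X"
    using bound by (intro integrable_const_bound[OF _ X]) simp
  moreover have "integrable M (\<lambda>x. (X x)\<^sup>2)"
    using bound borel_measurable_power[OF X] by (intro integrable_const_bound[of _ "c\<^sup>2"])
      (auto simp: abs_le_square_iff[symmetric] elim!: eventually_mono)
  ultimately have "variance X \<le> expectation (\<lambda>x. (X x)\<^sup>2)"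
    by (simp add: variance_eq)
  also have "\<dots> \<le> expectation (\<lambda>x. c\<^sup>2)"
    using bound \<open>integrable M (\<lambda>x. (X x)\<^sup>2)\<close>
    by (intro integral_mono_AE) (auto simp: abs_le_square_iff[symmetric] elim!: eventually_mono)
  finally show ?thesis
    by (simp add: prob_space)
qed

lemma expectation_Pi_pmf_component:
  fixes f :: "'a \<Rightarrow> real"
  assumes "finite I" "i \<in> I"
  shows "measure_pmf.expectation (Pi_pmf I dflt D) (\<lambda>s. f (s i)) =
         measure_pmf.expectation (D i) f"
  using Pi_pmf_component[OF assms(1), of i dflt D] assms(2) by (metis integral_map_pmf)

lemma expectation_mult_Pi_pmf_components:
  fixes g h :: "'a \<Rightarrow> real" and D :: "'i \<Rightarrow> 'a pmf"
  assumes I: "finite I" and ij: "i \<in> I" "j \<in> I" "i \<noteq> j"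
    and int: "integrable (D i) g" "integrable (D j) h"
  shows "measure_pmf.expectation (Pi_pmf I dflt D) (\<lambda>s. g (s i) * h (s j)) =
         measure_pmf.expectation (D i) g * measure_pmf.expectation (D j) h"
proof -
  let ?M = "Pi_pmf I dflt D"
  note M = measure_pmf.prob_space_axioms[of ?M]
  define X where "X k = (\<lambda>s. (if k = i then g else h) (s k))" for k
  have "integrable ?M (\<lambda>s. f (s k)) \<longleftrightarrow> integrable (D k) f"
    if "k \<in> I" for k and f :: "'a \<Rightarrow> real"
    using Pi_pmf_component[OF I, of k dflt D] that by (metis integrable_map_pmf_eq)
  then have "integrable ?M (X k)" if "k \<in> {i, j}" for k
    using that int ij by (auto simp: X_def)
  moreover have "prob_space.indep_vars ?M (\<lambda>_. borel) X {i, j}"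
    unfolding X_def
    by (rule prob_space.indep_vars_compose2[OF M
          prob_space.indep_vars_subset[OF M indep_vars_Pi_pmf[OF I]]])
       (use ij in auto)
  ultimately have "measure_pmf.expectation ?M (\<lambda>s. \<Prod>k\<in>{i, j}. X k s) =
      (\<Prod>k\<in>{i, j}. measure_pmf.expectation ?M (X k))"
    by (intro prob_space.indep_vars_lebesgue_integral[OF M]) auto
  then show ?thesis
    using ij I by (simp add: X_def expectation_Pi_pmf_component)
qed

lemma variance_sum_Pi_pmf:
  fixes f :: "'i \<Rightarrow> 'a \<Rightarrow> real" and D :: "'i \<Rightarrow> 'a pmf"
  assumes I: "finite I" and D: "\<And>i. i \<in> I \<Longrightarrow> finite (set_pmf (D i))"
  shows "measure_pmf.variance (Pi_pmf I dflt D) (\<lambda>s. \<Sum>i\<in>I. f i (s i)) =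
         (\<Sum>i\<in>I. measure_pmf.variance (D i) (f i))"
proof -
  let ?M = "Pi_pmf I dflt D"
  have "finite (set_pmf ?M)"
    using I D by (simp add: set_Pi_pmf finite_PiE_dflt)
  then have int_M: "integrable ?M g" for g :: "_ \<Rightarrow> real"
    by (rule integrable_measure_pmf_finite)
  have int_D: "integrable (D i) g" if "i \<in> I" for i and g :: "_ \<Rightarrow> real"
    using D[OF that] by (rule integrable_measure_pmf_finite)
  define c where "c i = (\<lambda>t. f i t - measure_pmf.expectation (D i) (f i))" for i
  have mean_c: "measure_pmf.expectation (D i) (c i) = 0" if "i \<in> I" for i
    unfolding c_def using that by (subst Bochner_Integration.integral_diff) (auto intro: int_D)
  have "measure_pmf.expectation ?M (\<lambda>s. \<Sum>i\<in>I. f i (s i)) =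
      (\<Sum>i\<in>I. measure_pmf.expectation (D i) (f i))"
    using I int_M by (simp add: expectation_Pi_pmf_component)
  moreover have "(\<Sum>i\<in>I. f i (s i)) - (\<Sum>i\<in>I. measure_pmf.expectation (D i) (f i)) =
      (\<Sum>i\<in>I. c i (s i))" for s
    by (simp add: c_def sum_subtractf)
  ultimately have "measure_pmf.variance ?M (\<lambda>s. \<Sum>i\<in>I. f i (s i)) =
      measure_pmf.expectation ?M (\<lambda>s. \<Sum>i\<in>I. \<Sum>k\<in>I. c i (s i) * c k (s k))"
    by (simp add: power2_eq_square sum_product)
  also have "\<dots> =
      (\<Sum>i\<in>I. \<Sum>k\<in>I. measure_pmf.expectation ?M (\<lambda>s. c i (s i) * c k (s k)))"
    using int_M by simp
  also have "\<dots> =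
      (\<Sum>i\<in>I. \<Sum>k\<in>I. if k = i then measure_pmf.variance (D i) (f i) else 0)"
  proof (intro sum.cong refl)
    fix i k assume "i \<in> I" "k \<in> I"
    show "measure_pmf.expectation ?M (\<lambda>s. c i (s i) * c k (s k)) =
        (if k = i then measure_pmf.variance (D i) (f i) else 0)"
    proof (cases "k = i")
      case True
      then show ?thesis
        using expectation_Pi_pmf_component[OF I \<open>i \<in> I\<close>, where f = "\<lambda>t. c i t * c i t"]
        by (simp add: c_def power2_eq_square)
    next
      case False
      then show ?thesis
        using expectation_mult_Pi_pmf_components[OF I \<open>i \<in> I\<close> \<open>k \<in> I\<close> _
            int_D[OF \<open>i \<in> I\<close>, of "c i"] int_D[OF \<open>k \<in> I\<close>, of "c k"]]
        by (simp add: mean_c \<open>i \<in> I\<close> \<open>k \<in> I\<close>)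
    qed
  qed
  also have "\<dots> = (\<Sum>i\<in>I. measure_pmf.variance (D i) (f i))"
    using I by simp
  finally show ?thesis .
qed

lemma phat_eq_sum_rounds:
  "phat K N u xb ab lam w s =
     (\<Sum>j<K * N. lam w (j div N) / real N *
        (if best_resp (u (s j)) (xb (j div N)) = ab (j div N) then 1 else 0))"
proof (cases "N = 0")
  case False
  then show ?thesis
    unfolding phat_def phat_b_def sum_lessThan_mult_blocks
    by (intro sum.cong refl) (simp add: sum_distrib_left)
qed (simp add: phat_def phat_b_def)

theorem mainTheorem9:
  fixes K N :: nat
    and u :: "nat \<Rightarrow> 'l::finite \<Rightarrow> 'f::{finite,linorder} \<Rightarrow> real"
    and F :: "nat pmf"
    and b :: "nat \<Rightarrow> nat \<Rightarrow> real"
    and lam :: "(nat \<Rightarrow> real) \<Rightarrow> nat \<Rightarrow> real"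
    and xb :: "nat \<Rightarrow> 'l \<Rightarrow> real"
    and ab :: "nat \<Rightarrow> 'f"
    and x :: "'l \<Rightarrow> real"
    and af :: 'f
  assumes "N > 0"
    and u_range: "\<And>i al a. i < K \<Longrightarrow> 0 \<le> u i al a \<and> u i al a \<le> 1"
    and F_support: "set_pmf F \<subseteq> {..<K}"
    and xb_mixed_strats: "\<And>i. i < K \<Longrightarrow> xb i \<in> mixed_strats"
    and b_def: "\<And>i. i < K \<Longrightarrow> b i = ind_vec K u (xb i) (ab i)"
    and spanner: "\<And>w. w \<in> Wset K u \<Longrightarrow>
        (\<forall>i<K. \<bar>lam w i\<bar> \<le> 1) \<and> (\<forall>j<K. w j = (\<Sum>i<K. lam w i * b i j))"
    and "x \<in> mixed_strats"
  shows "measure_pmf.variance (Pi_pmf {..<K * N} 0 (\<lambda>_. F))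
           (phat K N u xb ab lam (ind_vec K u x af))
         \<le> real K / real N"
proof -
  define w where "w = ind_vec K u x af"
  have "w \<in> Wset K u"
    using \<open>x \<in> mixed_strats\<close> unfolding w_def Wset_def by blast
  then have lam_bound: "\<bar>lam w i\<bar> \<le> 1" if "i < K" for i
    using spanner that by blast
  define f where "f j t = lam w (j div N) / real N *
    (if best_resp (u t) (xb (j div N)) = ab (j div N) then 1 else 0)" for j t
  have f_bound: "\<bar>f j t\<bar> \<le> 1 / real N" if "j < K * N" for j t
    using lam_bound[of "j div N"] that \<open>N > 0\<close>
    by (auto simp: f_def abs_mult less_mult_imp_div_less divide_le_cancel)
  have phat_w: "phat K N u xb ab lam w = (\<lambda>s. \<Sum>j<K * N. f j (s j))"
    by (simp add: fun_eq_iff phat_eq_sum_rounds f_def)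
  have "finite (set_pmf F)"
    using F_support finite_subset by blast
  then have "measure_pmf.variance (Pi_pmf {..<K * N} 0 (\<lambda>_. F)) (phat K N u xb ab lam w) =
      (\<Sum>j<K * N. measure_pmf.variance F (f j))"
    unfolding phat_w by (intro variance_sum_Pi_pmf) auto
  also have "\<dots> \<le> (\<Sum>j<K * N. (1 / real N)\<^sup>2)"
    using f_bound by (intro sum_mono measure_pmf.variance_le_square_bound) (auto intro: AE_pmfI)
  also have "\<dots> = real K / real N"
    using \<open>N > 0\<close> by (simp add: power2_eq_square)
  finally show ?thesis
    unfolding w_def .
qed

end
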